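(* Let $\tilde L$ be a minimum-size counterexample. Then the least element $0_{\tilde L}$ is meet-reducible in $\tilde L$, i.e. it is lower covered by (has) at least two atoms.
   Context: For a poset $P$, $x$ upper covers $y$ if $y<x$ with nothing strictly between. Join-irreducible: upper covers exactly one element; meet-reducible: lower covers more than one element; an atom is an element upper covering the least element. For $x\in P$, ${\uparrow}x=\{y: x\le y\}$. A counterexample is a finite lattice $L$ with $|L|>1$ in which every join-irreducible $j$ satisfies $|{\uparrow}j|>|L|/2$; a minimum-size counterexample is a counterexample $\tilde L$ such that no counterexample has fewer elements. *)

theory Defs
  imports Main
begin

text \<open>A finite poset/lattice is represented by a carrier set S and an order relation le
  (le x y meaning x is at most y), only relevant on S.\<close>

definition is_poset :: "'a set \<Rightarrow> ('a \<Rightarrow> 'a \<Rightarrow> bool) \<Rightarrow> bool" where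
  "is_poset S le \<longleftrightarrow>
     (\<forall>x\<in>S. le x x) \<and>
     (\<forall>x\<in>S. \<forall>y\<in>S. le x y \<and> le y x \<longrightarrow> x = y) \<and>
     (\<forall>x\<in>S. \<forall>y\<in>S. \<forall>z\<in>S. le x y \<and> le y z \<longrightarrow> le x z)"

definition is_lattice :: "'a set \<Rightarrow> ('a \<Rightarrow> 'a \<Rightarrow> bool) \<Rightarrow> bool" where
  "is_lattice S le \<longleftrightarrow> is_poset S le \<and>
     (\<forall>x\<in>S. \<forall>y\<in>S. \<exists>s\<in>S. le x s \<and> le y s \<and> (\<forall>w\<in>S. le x w \<and> le y w \<longrightarrow> le s w)) \<and>
     (\<forall>x\<in>S. \<forall>y\<in>S. \<exists>i\<in>S. le i x \<and> le i y \<and> (\<forall>w\<in>S. le w x \<and> le w y \<longrightarrow> le w i))"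

definition finite_lattice :: "'a set \<Rightarrow> ('a \<Rightarrow> 'a \<Rightarrow> bool) \<Rightarrow> bool" where
  "finite_lattice S le \<longleftrightarrow> finite S \<and> is_lattice S le"

definition upper_covers :: "'a set \<Rightarrow> ('a \<Rightarrow> 'a \<Rightarrow> bool) \<Rightarrow> 'a \<Rightarrow> 'a \<Rightarrow> bool" where
  "upper_covers S le x y \<longleftrightarrow> x \<in> S \<and> y \<in> S \<and> le y x \<and> y \<noteq> x \<and>
     \<not> (\<exists>z\<in>S. le y z \<and> z \<noteq> y \<and> le z x \<and> z \<noteq> x)"

definition join_irreducible :: "'a set \<Rightarrow> ('a \<Rightarrow> 'a \<Rightarrow> bool) \<Rightarrow> 'a \<Rightarrow> bool" where
  "join_irreducible S le j \<longleftrightarrow> j \<in> S \<and> card {y \<in> S. upper_covers S le j y} = 1"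

definition meet_reducible :: "'a set \<Rightarrow> ('a \<Rightarrow> 'a \<Rightarrow> bool) \<Rightarrow> 'a \<Rightarrow> bool" where
  "meet_reducible S le x \<longleftrightarrow> x \<in> S \<and> card {y \<in> S. upper_covers S le y x} > 1"

definition up_set :: "'a set \<Rightarrow> ('a \<Rightarrow> 'a \<Rightarrow> bool) \<Rightarrow> 'a \<Rightarrow> 'a set" where
  "up_set S le x = {y \<in> S. le x y}"

definition is_least :: "'a set \<Rightarrow> ('a \<Rightarrow> 'a \<Rightarrow> bool) \<Rightarrow> 'a \<Rightarrow> bool" where
  "is_least S le z \<longleftrightarrow> z \<in> S \<and> (\<forall>x\<in>S. le z x)"

definition counterexample :: "'a set \<Rightarrow> ('a \<Rightarrow> 'a \<Rightarrow> bool) \<Rightarrow> bool" where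
  "counterexample S le \<longleftrightarrow> finite_lattice S le \<and> card S > 1 \<and>
     (\<forall>j. join_irreducible S le j \<longrightarrow> 2 * card (up_set S le j) > card S)"

text \<open>Minimum-size counterexample: no counterexample has fewer elements. Every finite
  lattice is isomorphic to one carried by a subset of nat, so competitors range over
  lattices on nat.\<close>
definition min_counterexample :: "'a set \<Rightarrow> ('a \<Rightarrow> 'a \<Rightarrow> bool) \<Rightarrow> bool" where
  "min_counterexample S le \<longleftrightarrow> counterexample S le \<and>
     (\<forall>(S' :: nat set) le'. counterexample S' le' \<longrightarrow> card S \<le> card S')"

end

theory Submission
  imports Defs
begin

text \<open>If the least element z had only one atom a, every other element would lie above a.
  Then a is join-irreducible with up-set L - {z}, which forces |L| > 2, and removing z
  leaves a lattice with least element a whose join-irreducibles are join-irreducibles of L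
  with the same up-sets. So L - {z} is a smaller counterexample.\<close>

lemma is_posetD:
  assumes "is_poset S le"
  shows is_poset_refl: "x \<in> S \<Longrightarrow> le x x"
    and is_poset_antisym: "\<lbrakk>x \<in> S; y \<in> S; le x y; le y x\<rbrakk> \<Longrightarrow> x = y"
    and is_poset_trans: "\<lbrakk>x \<in> S; y \<in> S; w \<in> S; le x y; le y w\<rbrakk> \<Longrightarrow> le x w"
  using assms unfolding is_poset_def by blast+

lemma is_lattice_poset: "is_lattice S le \<Longrightarrow> is_poset S le"
  unfolding is_lattice_def by blast

lemma counterexample_lattice:
  "counterexample S le \<Longrightarrow> finite S \<and> is_lattice S le"
  unfolding counterexample_def finite_lattice_def by blast

lemma is_least_unique_below:
  "\<lbrakk>is_poset S le; is_least S le z; y \<in> S; le y z\<rbrakk> \<Longrightarrow> y = z"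
  unfolding is_least_def by (blast dest: is_poset_antisym)

lemma is_lattice_image:
  assumes "inj_on g B" and "is_lattice (g ` B) le"
  shows "is_lattice B (\<lambda>u v. le (g u) (g v))"
proof -
  have pos: "is_poset (g ` B) le" using assms(2) by (rule is_lattice_poset)
  have "is_poset B (\<lambda>u v. le (g u) (g v))"
    unfolding is_poset_def
  proof (intro conjI ballI impI)
    fix x y w assume "x \<in> B" "y \<in> B" "w \<in> B"
    show "le (g x) (g x)" using \<open>x \<in> B\<close> is_poset_refl[OF pos] by blast
    show "le (g x) (g y) \<and> le (g y) (g x) \<Longrightarrow> x = y"
      using \<open>x \<in> B\<close> \<open>y \<in> B\<close> is_poset_antisym[OF pos] inj_on_eq_iff[OF assms(1)] by blast
    show "le (g x) (g y) \<and> le (g y) (g w) \<Longrightarrow> le (g x) (g w)"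
      using \<open>x \<in> B\<close> \<open>y \<in> B\<close> \<open>w \<in> B\<close> is_poset_trans[OF pos] by blast
  qed
  then show ?thesis
    using assms(2) unfolding is_lattice_def by simp
qed

lemma upper_covers_image:
  assumes "inj_on g B" and "x \<in> B" and "y \<in> B"
  shows "upper_covers B (\<lambda>u v. le (g u) (g v)) x y \<longleftrightarrow> upper_covers (g ` B) le (g x) (g y)"
  using assms unfolding upper_covers_def inj_on_def by auto

lemma card_Collect_image:
  assumes "inj_on g B"
  shows "card {y \<in> g ` B. P y} = card {y \<in> B. P (g y)}"
proof -
  have "{y \<in> g ` B. P y} = g ` {y \<in> B. P (g y)}" by auto
  then show ?thesis using assms by (simp add: card_image inj_on_subset)
qed

lemma join_irreducible_image:
  assumes "inj_on g B" and "x \<in> B"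
  shows "join_irreducible B (\<lambda>u v. le (g u) (g v)) x \<longleftrightarrow> join_irreducible (g ` B) le (g x)"
proof -
  have "{y \<in> B. upper_covers B (\<lambda>u v. le (g u) (g v)) x y}
      = {y \<in> B. upper_covers (g ` B) le (g x) (g y)}"
    using upper_covers_image[OF assms] by blast
  then show ?thesis
    using assms card_Collect_image[OF assms(1), of "upper_covers (g ` B) le (g x)"]
    unfolding join_irreducible_def by simp
qed

lemma card_up_set_image:
  assumes "inj_on g B"
  shows "card (up_set B (\<lambda>u v. le (g u) (g v)) x) = card (up_set (g ` B) le (g x))"
  using card_Collect_image[OF assms, of "le (g x)"] unfolding up_set_def by simp

lemma counterexample_image:
  assumes inj: "inj_on g B" and ce: "counterexample (g ` B) le"
  shows "counterexample B (\<lambda>u v. le (g u) (g v))"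
  unfolding counterexample_def finite_lattice_def
proof (intro conjI allI impI)
  show "finite B" using ce inj finite_image_iff counterexample_lattice by blast
  show "is_lattice B (\<lambda>u v. le (g u) (g v))"
    using inj ce counterexample_lattice is_lattice_image by blast
  show "card B > 1" using ce inj card_image unfolding counterexample_def by metis
next
  fix j assume "join_irreducible B (\<lambda>u v. le (g u) (g v)) j"
  moreover from this have "j \<in> B" unfolding join_irreducible_def by blast
  ultimately show "2 * card (up_set B (\<lambda>u v. le (g u) (g v)) j) > card B"
    using ce inj join_irreducible_image card_up_set_image card_image
    unfolding counterexample_def by metis
qed

lemma counterexample_nat_copy:
  assumes "counterexample S le"
  obtains T :: "nat set" and le' where "counterexample T le'" and "card T = card S"
proof -
  have "finite S" using assms counterexample_lattice by blast
  then obtain h where "bij_betw h S {0..<card S}" using ex_bij_betw_finite_nat by blast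
  then have "bij_betw (inv_into S h) {0..<card S} S" by (rule bij_betw_inv_into)
  then have "counterexample {0..<card S} (\<lambda>u v. le (inv_into S h u) (inv_into S h v))"
    using assms counterexample_image unfolding bij_betw_def by metis
  then show ?thesis using that by simp
qed

lemma min_counterexample_card_le:
  "\<lbrakk>min_counterexample S le; counterexample T le'\<rbrakk> \<Longrightarrow> card S \<le> card T"
  unfolding min_counterexample_def by (metis counterexample_nat_copy)

lemma exists_atom_below:
  assumes pos: "is_poset S le" and fin: "finite S" and least: "is_least S le z"
    and "x \<in> S" and "x \<noteq> z"
  shows "\<exists>a. upper_covers S le a z \<and> le a x"
  using assms(4,5)
proof (induction "card {u \<in> S. le u x}" arbitrary: x rule: less_induct)
  case (less x)
  show ?case
  proof (cases "upper_covers S le x z")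
    case True
    then show ?thesis using less.prems is_poset_refl[OF pos] by blast
  next
    case False
    then obtain w where w: "w \<in> S" "w \<noteq> z" "le w x" "w \<noteq> x"
      using less.prems least unfolding upper_covers_def is_least_def by blast
    have "{u \<in> S. le u w} \<subset> {u \<in> S. le u x}"
      using w less.prems is_posetD[OF pos] by blast
    then have "card {u \<in> S. le u w} < card {u \<in> S. le u x}"
      using fin by (simp add: psubset_card_mono)
    then obtain a where "upper_covers S le a z" and "le a w"
      using less.hyps w by blast
    then show ?thesis
      using w less.prems is_poset_trans[OF pos] unfolding upper_covers_def by blast
  qed
qed

lemma is_lattice_remove_least:
  assumes lat: "is_lattice S le" and least: "is_least S le z"
    and least': "is_least (S - {z}) le a"
  shows "is_lattice (S - {z}) le"
  unfolding is_lattice_def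
proof (intro conjI ballI)
  have pos: "is_poset S le" using lat by (rule is_lattice_poset)
  then show "is_poset (S - {z}) le" unfolding is_poset_def by blast
  fix x y assume x: "x \<in> S - {z}" and y: "y \<in> S - {z}"
  obtain s where "s \<in> S" "le x s" "le y s" "\<forall>w\<in>S. le x w \<and> le y w \<longrightarrow> le s w"
    using lat x y unfolding is_lattice_def by blast
  moreover have "s \<noteq> z" using \<open>s \<in> S\<close> \<open>le x s\<close> x is_least_unique_below[OF pos least] by blast
  ultimately show "\<exists>s\<in>S - {z}. le x s \<and> le y s \<and> (\<forall>w\<in>S - {z}. le x w \<and> le y w \<longrightarrow> le s w)"
    by blast
  obtain i where "i \<in> S" "le i x" "le i y" "\<forall>w\<in>S. le w x \<and> le w y \<longrightarrow> le w i"
    using lat x y unfolding is_lattice_def by blast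
  moreover from this have "le a i" using least' x y unfolding is_least_def by blast
  then have "i \<noteq> z" using least' is_least_unique_below[OF pos least] unfolding is_least_def by blast
  ultimately show "\<exists>i\<in>S - {z}. le i x \<and> le i y \<and> (\<forall>w\<in>S - {z}. le w x \<and> le w y \<longrightarrow> le w i)"
    by blast
qed

text \<open>The hypothesis that a is least in S - {z} says exactly that a is the unique atom
  above the least element z.\<close>

lemma unique_atom_join_irreducible:
  assumes pos: "is_poset S le" and least: "is_least S le z"
    and least': "is_least (S - {z}) le a"
  shows "join_irreducible S le a" and "up_set S le a = S - {z}"
proof -
  have z: "z \<in> S" "\<And>x. x \<in> S \<Longrightarrow> le z x" using least unfolding is_least_def by auto
  have a: "a \<in> S" "a \<noteq> z" "\<And>x. \<lbrakk>x \<in> S; x \<noteq> z\<rbrakk> \<Longrightarrow> le a x"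
    using least' unfolding is_least_def by auto
  have covers_z: "upper_covers S le a z"
    using z a is_poset_antisym[OF pos] unfolding upper_covers_def by metis
  have "y = z" if "upper_covers S le a y" for y
    using that a is_poset_antisym[OF pos] unfolding upper_covers_def by metis
  then have "{y \<in> S. upper_covers S le a y} = {z}"
    using covers_z z by blast
  then show "join_irreducible S le a"
    using a unfolding join_irreducible_def by simp
  show "up_set S le a = S - {z}"
    using a is_least_unique_below[OF pos least] unfolding up_set_def by blast
qed

lemma covers_remove_least:
  assumes pos: "is_poset S le" and least: "is_least S le z"
    and least': "is_least (S - {z}) le a" and "j \<in> S - {z}" and "j \<noteq> a"
  shows "{y \<in> S - {z}. upper_covers (S - {z}) le j y} = {y \<in> S. upper_covers S le j y}"
  using assms is_least_unique_below[OF pos least]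
  unfolding upper_covers_def is_least_def by blast

lemma join_irreducible_remove_least:
  assumes pos: "is_poset S le" and least: "is_least S le z"
    and least': "is_least (S - {z}) le a" and ji: "join_irreducible (S - {z}) le j"
  shows "join_irreducible S le j"
proof -
  have j: "j \<in> S - {z}" using ji unfolding join_irreducible_def by blast
  have "{y \<in> S - {z}. upper_covers (S - {z}) le a y} = {}"
    using least' is_poset_antisym[OF pos] unfolding upper_covers_def is_least_def by blast
  then have "j \<noteq> a" using ji unfolding join_irreducible_def by (metis card.empty zero_neq_one)
  then show ?thesis
    using ji covers_remove_least[OF pos least least' j] unfolding join_irreducible_def by simp
qed

lemma counterexample_remove_least:
  assumes ce: "counterexample S le" and least: "is_least S le z"
    and least': "is_least (S - {z}) le a"
  shows "counterexample (S - {z}) le"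
  unfolding counterexample_def finite_lattice_def
proof (intro conjI allI impI)
  have fin: "finite S" and lat: "is_lattice S le" using ce by (simp_all add: counterexample_lattice)
  have pos: "is_poset S le" using lat by (rule is_lattice_poset)
  have card_S: "card (S - {z}) = card S - 1"
    using fin least unfolding is_least_def by simp
  show "finite (S - {z})" using fin by simp
  show "is_lattice (S - {z}) le" using lat least least' by (rule is_lattice_remove_least)
  have "2 * card (up_set S le a) > card S"
    using ce unique_atom_join_irreducible(1)[OF pos least least'] unfolding counterexample_def by blast
  then show "card (S - {z}) > 1"
    using unique_atom_join_irreducible(2)[OF pos least least'] card_S by simp
  fix j assume ji: "join_irreducible (S - {z}) le j"
  then have "2 * card (up_set S le j) > card S"
    using ce join_irreducible_remove_least[OF pos least least'] unfolding counterexample_def by blast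
  moreover have "up_set (S - {z}) le j = up_set S le j"
    using ji is_least_unique_below[OF pos least] unfolding up_set_def join_irreducible_def by blast
  ultimately show "2 * card (up_set (S - {z}) le j) > card (S - {z})"
    using card_S by simp
qed

theorem corollary2p2:
  fixes S :: "'a set" and le :: "'a \<Rightarrow> 'a \<Rightarrow> bool"
  assumes "min_counterexample S le"
    and "is_least S le z"
  shows "meet_reducible S le z"
proof (rule ccontr)
  assume not_mr: "\<not> meet_reducible S le z"
  have ce: "counterexample S le" using assms(1) unfolding min_counterexample_def by blast
  have fin: "finite S" and pos: "is_poset S le"
    using ce by (simp_all add: counterexample_lattice is_lattice_poset)
  define atoms where "atoms = {y \<in> S. upper_covers S le y z}"
  have "card atoms \<le> 1" and "finite atoms"
    using not_mr assms(2) fin unfolding meet_reducible_def is_least_def atoms_def by auto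
  then have one_atom: "\<And>a b. \<lbrakk>a \<in> atoms; b \<in> atoms\<rbrakk> \<Longrightarrow> a = b"
    by (simp add: card_le_Suc0_iff_eq)
  have "\<not> S \<subseteq> {z}" using ce card_mono[of "{z}" S] unfolding counterexample_def by auto
  then obtain x where "x \<in> S" "x \<noteq> z" by blast
  then obtain a where "a \<in> atoms"
    using exists_atom_below[OF pos fin assms(2)] unfolding atoms_def upper_covers_def by blast
  have "is_least (S - {z}) le a"
    using exists_atom_below[OF pos fin assms(2)] one_atom \<open>a \<in> atoms\<close>
    unfolding is_least_def atoms_def upper_covers_def by blast
  then have "counterexample (S - {z}) le"
    by (rule counterexample_remove_least[OF ce assms(2)])
  then have "card S \<le> card (S - {z})"
    by (rule min_counterexample_card_le[OF assms(1)])
  then show False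
    using card_Diff1_less[OF fin] assms(2) unfolding is_least_def by (meson leD)
qed

end
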